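(* Let $n\geq5$ and let $U,V$ be monomials. Then $U,V\in F(J(P_{n-3})^2)$ if and only if both $x_n^2x_{n-2}^2U$ and $x_n^2x_{n-2}^2V$ belong to $F(J(P_n)^2)$. Moreover, in that case $U>_{\mathcal R}V$ (rooted order on $F(J(P_{n-3})^2)$) if and only if $x_n^2x_{n-2}^2U>_{\mathcal R}x_n^2x_{n-2}^2V$ (rooted order on $F(J(P_n)^2)$).
   Context: Let $K$ be a field. For $m\geq 1$, $P_m$ is the path graph on vertices $x_1,\ldots,x_m$ with edges $\{x_i,x_{i+1}\}$. The cover ideal $J(P_m)$ is generated by the monomials $\prod_{x\in C}x$ with $C$ a minimal vertex cover of $P_m$. For a monomial ideal $I$, $G(I)$ is its set of minimal monomial generators and $F(I^2)=\{uv:u,v\in G(I)\}$. The rooted list $\mathcal R(P_m)$ is defined recursively: $\mathcal R(P_1)$ empty; $\mathcal R(P_2)=x_1,x_2$; $\mathcal R(P_3)=x_2,x_1x_3$; $\mathcal R(P_4)=x_1x_3,x_2x_3,x_2x_4$; for $m\geq5$, if $\mathcal R(P_{m-2})=u_1,\ldots,u_r$ and $\mathcal R(P_{m-3})=v_1,\ldots,v_s$, then $\mathcal R(P_m)=x_{m-1}u_1,\ldots,x_{m-1}u_r,x_mx_{m-2}v_1,\ldots,x_mx_{m-2}v_s$; it lists each element of $G(J(P_m))$ once. With $\mathcal R(P_m)=u_1,\ldots,u_q$, each $M\in F(J(P_m)^2)$ can be written $u_1^{a_1}\cdots u_q^{a_q}$ with $a_i\geq0$, $\sum a_i=2$; the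 maximal expression of $M$ is the one with lexicographically largest exponent vector. The rooted order on $F(J(P_m)^2)$: $M>_{\mathcal R}N$ iff the exponent vector of the maximal expression of $M$ is lexicographically larger than that of $N$. *)

theory Defs
  imports "HOL-Library.Multiset"
begin

text \<open>Monomials in the variables x_1, x_2, ... are represented by multisets of
  variable indices (x_i is represented by i); multiplication is multiset sum.\<close>

type_synonym monomial = "nat multiset"

definition is_vertex_cover_path :: "nat \<Rightarrow> nat set \<Rightarrow> bool" where
  "is_vertex_cover_path m C \<longleftrightarrow>
     C \<subseteq> {1..m} \<and> (\<forall>i. 1 \<le> i \<and> i < m \<longrightarrow> i \<in> C \<or> Suc i \<in> C)"

definition is_min_vertex_cover_path :: "nat \<Rightarrow> nat set \<Rightarrow> bool" where
  "is_min_vertex_cover_path m C \<longleftrightarrow>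
     is_vertex_cover_path m C \<and> (\<forall>D. D \<subset> C \<longrightarrow> \<not> is_vertex_cover_path m D)"

text \<open>G(J(P_m)): minimal generators of the cover ideal.\<close>
definition G_cover :: "nat \<Rightarrow> monomial set" where
  "G_cover m = {mset_set C | C. is_min_vertex_cover_path m C}"

definition F_sq :: "nat \<Rightarrow> monomial set" where
  "F_sq m = {u + v | u v. u \<in> G_cover m \<and> v \<in> G_cover m}"

fun rooted :: "nat \<Rightarrow> monomial list" where
  "rooted 0 = []"
| "rooted (Suc 0) = []"
| "rooted (Suc (Suc 0)) = [{#1#}, {#2#}]"
| "rooted (Suc (Suc (Suc 0))) = [{#2#}, {#1, 3#}]"
| "rooted (Suc (Suc (Suc (Suc 0)))) = [{#1, 3#}, {#2, 3#}, {#2, 4#}]"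
| "rooted (Suc (Suc (Suc (Suc (Suc k))))) =
     map (\<lambda>u. {#k + 4#} + u) (rooted (Suc (Suc (Suc k)))) @
     map (\<lambda>v. {#k + 5, k + 3#} + v) (rooted (Suc (Suc k)))"

definition expressions :: "nat \<Rightarrow> monomial \<Rightarrow> nat list set" where
  "expressions m M = {a. length a = length (rooted m) \<and> sum_list a = 2 \<and>
      (\<Sum>i<length (rooted m). repeat_mset (a ! i) (rooted m ! i)) = M}"

definition lex_less :: "nat list \<Rightarrow> nat list \<Rightarrow> bool" where
  "lex_less a b \<longleftrightarrow> (a, b) \<in> lexord {(x, y). x < y}"

definition max_expr :: "nat \<Rightarrow> monomial \<Rightarrow> nat list" where
  "max_expr m M = (THE a. a \<in> expressions m M \<and>
      (\<forall>b \<in> expressions m M. b = a \<or> lex_less b a))"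

definition rooted_gt :: "nat \<Rightarrow> monomial \<Rightarrow> monomial \<Rightarrow> bool" where
  "rooted_gt m M N \<longleftrightarrow> M \<in> F_sq m \<and> N \<in> F_sq m \<and>
      lex_less (max_expr m N) (max_expr m M)"

end

theory Submission
  imports Defs "HOL-Library.List_Lexorder"
begin

(* A set C is a minimal vertex cover of P_m iff it covers every edge and every c in C has a
   private edge, i.e. a neighbour outside C.  Hence a minimal cover of P_n containing x_n and
   x_(n-2) misses x_(n-1) and is exactly C' + {n-2, n} with C' a minimal cover of P_(n-3); this
   identifies F(J(P_(n-3))^2) with the members of F(J(P_n)^2) divisible by x_n^2 x_(n-2)^2.
   In R(P_n) every generator of the first block x_(n-1) R(P_(n-2)) is divisible by x_(n-1),
   which does not divide x_n^2 x_(n-2)^2 U, so the expressions of x_n^2 x_(n-2)^2 U are those of U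
   over the second block x_n x_(n-2) R(P_(n-3)), preceded by zeros.  Prepending a fixed list
   is monotone for the lexicographic order, so maximal expressions and their comparison are
   preserved. *)

lemma vertex_cover_path_mono:
  "is_vertex_cover_path m D \<Longrightarrow> D \<subseteq> C \<Longrightarrow> C \<subseteq> {1..m} \<Longrightarrow> is_vertex_cover_path m C"
  unfolding is_vertex_cover_path_def by blast

lemma is_min_vertex_cover_path_iff_remove:
  "is_min_vertex_cover_path m C \<longleftrightarrow>
     is_vertex_cover_path m C \<and> (\<forall>c\<in>C. \<not> is_vertex_cover_path m (C - {c}))"
proof -
  have "(\<forall>D. D \<subset> C \<longrightarrow> \<not> is_vertex_cover_path m D)"
    if cover: "is_vertex_cover_path m C" and remove: "\<forall>c\<in>C. \<not> is_vertex_cover_path m (C - {c})"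
  proof (intro allI impI notI)
    fix D assume "D \<subset> C" "is_vertex_cover_path m D"
    moreover obtain c where "c \<in> C" "c \<notin> D" using \<open>D \<subset> C\<close> by blast
    moreover have "C \<subseteq> {1..m}" using cover unfolding is_vertex_cover_path_def by blast
    ultimately show False
      using remove vertex_cover_path_mono[of m D "C - {c}"] by blast
  qed
  moreover have "C - {c} \<subset> C" if "c \<in> C" for c using that by blast
  ultimately show ?thesis unfolding is_min_vertex_cover_path_def by blast
qed

lemma vertex_cover_path_remove_iff:
  assumes cover: "is_vertex_cover_path m C" and "c \<in> C"
  shows "is_vertex_cover_path m (C - {c}) \<longleftrightarrow>
           (1 < c \<longrightarrow> c - 1 \<in> C) \<and> (c < m \<longrightarrow> Suc c \<in> C)"
proof
  assume "is_vertex_cover_path m (C - {c})"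
  then have edge: "\<And>i. 1 \<le> i \<Longrightarrow> i < m \<Longrightarrow> i \<in> C - {c} \<or> Suc i \<in> C - {c}"
    unfolding is_vertex_cover_path_def by blast
  have "1 \<le> c" "c \<le> m" using cover \<open>c \<in> C\<close> unfolding is_vertex_cover_path_def by auto
  then show "(1 < c \<longrightarrow> c - 1 \<in> C) \<and> (c < m \<longrightarrow> Suc c \<in> C)"
    using edge[of c] edge[of "c - 1"] by auto
next
  assume "(1 < c \<longrightarrow> c - 1 \<in> C) \<and> (c < m \<longrightarrow> Suc c \<in> C)"
  then show "is_vertex_cover_path m (C - {c})"
    using cover unfolding is_vertex_cover_path_def by (auto simp: Suc_le_eq)
qed

lemma is_min_vertex_cover_path_iff_private_edges:
  "is_min_vertex_cover_path m C \<longleftrightarrow> is_vertex_cover_path m C \<and>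
     (\<forall>c\<in>C. (1 < c \<and> c - 1 \<notin> C) \<or> (c < m \<and> Suc c \<notin> C))"
  using vertex_cover_path_remove_iff unfolding is_min_vertex_cover_path_iff_remove by blast

lemma min_vertex_cover_path_subset:
  "is_min_vertex_cover_path m C \<Longrightarrow> C \<subseteq> {1..m}"
  unfolding is_min_vertex_cover_path_def is_vertex_cover_path_def by blast

lemma min_vertex_cover_path_finite:
  "is_min_vertex_cover_path m C \<Longrightarrow> finite C"
  using min_vertex_cover_path_subset finite_subset by blast

lemma min_vertex_cover_path_remove_penultimate:
  assumes "is_min_vertex_cover_path (j+2) C" "j+1 \<in> C"
  shows "is_min_vertex_cover_path j (C - {j+1})"
proof -
  have "j+2 \<notin> C"
    using assms unfolding is_min_vertex_cover_path_iff_private_edges by force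
  then show ?thesis
    using assms unfolding is_min_vertex_cover_path_iff_private_edges is_vertex_cover_path_def
    by (auto simp: subset_iff le_Suc_eq less_Suc_eq)
qed

lemma min_vertex_cover_path_remove_pair:
  assumes "is_min_vertex_cover_path (j+3) C" "j+1 \<in> C" "j+3 \<in> C"
  shows "is_min_vertex_cover_path j (C - {j+1, j+3})"
proof -
  have "j+2 \<notin> C"
    using assms unfolding is_min_vertex_cover_path_iff_private_edges by force
  then show ?thesis
    using assms unfolding is_min_vertex_cover_path_iff_private_edges is_vertex_cover_path_def
    by (auto simp: subset_iff le_Suc_eq less_Suc_eq eval_nat_numeral)
qed

lemma min_vertex_cover_path_insert_pair:
  assumes "is_min_vertex_cover_path j C"
  shows "is_min_vertex_cover_path (j+3) (insert (j+1) (insert (j+3) C))"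
  using assms unfolding is_min_vertex_cover_path_iff_private_edges is_vertex_cover_path_def
  by (auto simp: subset_iff le_Suc_eq less_Suc_eq)

lemma vertex_cover_path_neighbours:
  assumes "is_vertex_cover_path (j+2) C" "j+1 \<notin> C" "1 \<le> j"
  shows "j \<in> C" "j+2 \<in> C"
  using assms unfolding is_vertex_cover_path_def by force+

lemma G_cover_le_1:
  assumes "m \<le> 1"
  shows "G_cover m \<subseteq> {{#}}"
proof
  fix u assume "u \<in> G_cover m"
  then obtain C where C: "is_min_vertex_cover_path m C" "u = mset_set C"
    unfolding G_cover_def by blast
  have "c \<notin> C" for c
  proof
    assume "c \<in> C"
    then have "1 \<le> c" "c \<le> m" "1 < c \<or> c < m"
      using C(1) min_vertex_cover_path_subset[OF C(1)]
      unfolding is_min_vertex_cover_path_iff_private_edges by auto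
    then show False using assms by linarith
  qed
  then have "C = {}" by blast
  then show "u \<in> {{#}}" using C(2) by simp
qed

lemma G_cover_2: "G_cover 2 \<subseteq> {{#1#}, {#2#}}"
proof
  fix u assume "u \<in> G_cover 2"
  then obtain C where C: "is_min_vertex_cover_path 2 C" "u = mset_set C"
    unfolding G_cover_def by blast
  then have cover: "C \<subseteq> {1..2}" "1 \<in> C \<or> 2 \<in> C"
    and private_edge: "\<forall>c\<in>C. (1 < c \<and> c - 1 \<notin> C) \<or> (c < 2 \<and> Suc c \<notin> C)"
    unfolding is_min_vertex_cover_path_iff_private_edges is_vertex_cover_path_def
    by (auto simp: numeral_2_eq_2)
  have "\<not> (1 \<in> C \<and> 2 \<in> C)" using private_edge by auto
  moreover have "C \<subseteq> {1, 2}" using cover(1) by auto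
  ultimately have "C = {1} \<or> C = {2}" using cover(2) by blast
  then show "u \<in> {{#1#}, {#2#}}" using C(2) by auto
qed

lemma G_cover_insert_pair:
  assumes "u \<in> G_cover j"
  shows "{#j+3, j+1#} + u \<in> G_cover (j+3)"
proof -
  obtain C where C: "is_min_vertex_cover_path j C" "u = mset_set C"
    using assms unfolding G_cover_def by blast
  have "finite C" using min_vertex_cover_path_finite[OF C(1)] .
  moreover have "j+1 \<notin> C" "j+3 \<notin> C" using min_vertex_cover_path_subset[OF C(1)] by auto
  ultimately have "{#j+3, j+1#} + u = mset_set (insert (j+1) (insert (j+3) C))"
    using C(2) by simp
  then show ?thesis
    using min_vertex_cover_path_insert_pair[OF C(1)] unfolding G_cover_def by blast
qed

lemma G_cover_remove_pair:
  assumes "v \<in> G_cover (j+3)" "j+1 \<in># v" "j+3 \<in># v"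
  obtains u where "u \<in> G_cover j" "v = {#j+3, j+1#} + u"
proof -
  obtain C where C: "is_min_vertex_cover_path (j+3) C" "v = mset_set C"
    using assms(1) unfolding G_cover_def by blast
  have fin: "finite C" using min_vertex_cover_path_finite[OF C(1)] .
  have in_C: "j+1 \<in> C" "j+3 \<in> C" using assms(2,3) C(2) fin by auto
  have "C = insert (j+1) (insert (j+3) (C - {j+1, j+3}))" using in_C by blast
  then have "v = mset_set (insert (j+1) (insert (j+3) (C - {j+1, j+3})))"
    using C(2) by metis
  also have "\<dots> = {#j+3, j+1#} + mset_set (C - {j+1, j+3})"
    using fin by simp
  finally show thesis
    using that min_vertex_cover_path_remove_pair[OF C(1) in_C] unfolding G_cover_def by blast
qed

lemma G_cover_cases:
  assumes "v \<in> G_cover (j+3)"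
  obtains (penultimate) u where "u \<in> G_cover (j+1)" "v = {#j+2#} + u"
        | (outer_pair) u where "u \<in> G_cover j" "v = {#j+3, j+1#} + u"
proof -
  obtain C where C: "is_min_vertex_cover_path (j+3) C" "v = mset_set C"
    using assms unfolding G_cover_def by blast
  have fin: "finite C" using min_vertex_cover_path_finite[OF C(1)] .
  show thesis
  proof (cases "j+2 \<in> C")
    case True
    have "is_min_vertex_cover_path (j+1) (C - {j+2})"
      using min_vertex_cover_path_remove_penultimate[of "j+1" C] C(1) True
      by (simp add: eval_nat_numeral)
    moreover have "v = {#j+2#} + mset_set (C - {j+2})"
      using C(2) fin True by (simp add: mset_set.remove)
    ultimately show thesis using penultimate unfolding G_cover_def by blast
  next
    case False
    then have "j+1 \<in> C" "j+3 \<in> C"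
      using vertex_cover_path_neighbours[of "j+1" C] C(1)
      unfolding is_min_vertex_cover_path_def by (simp_all add: eval_nat_numeral)
    then have "j+1 \<in># v" "j+3 \<in># v" using C(2) fin by simp_all
    then obtain u where "u \<in> G_cover j" "v = {#j+3, j+1#} + u"
      using G_cover_remove_pair[OF assms] by blast
    then show thesis by (rule outer_pair)
  qed
qed

lemma rooted_Suc3:
  "2 \<le> j \<Longrightarrow> rooted (j+3) = map (\<lambda>u. {#j+2#} + u) (rooted (j+1)) @
     map (\<lambda>u. {#j+3, j+1#} + u) (rooted j)"
proof -
  assume "2 \<le> j"
  then obtain k where "j = k + 2" by (auto simp: le_iff_add)
  then show ?thesis by (simp add: eval_nat_numeral)
qed

lemma G_cover_subset_rooted: "2 \<le> m \<Longrightarrow> G_cover m \<subseteq> set (rooted m)"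
proof (induction m rule: less_induct)
  case (less m)
  have "m = 2 \<or> m = 0 + 3 \<or> m = 1 + 3 \<or> (\<exists>j. 2 \<le> j \<and> m = j + 3)"
    using less.prems by presburger
  then show ?case
  proof (elim disjE exE conjE)
    assume "m = 2"
    then show ?case using G_cover_2 by (simp add: numeral_2_eq_2)
  next
    assume m: "m = 0 + 3"
    show ?case
    proof
      fix v assume "v \<in> G_cover m"
      then show "v \<in> set (rooted m)"
        unfolding m by (cases rule: G_cover_cases)
          (use G_cover_le_1 in \<open>auto simp: eval_nat_numeral\<close>)
    qed
  next
    assume m: "m = 1 + 3"
    show ?case
    proof
      fix v assume "v \<in> G_cover m"
      then show "v \<in> set (rooted m)"
        unfolding m by (cases rule: G_cover_cases)
          (use G_cover_le_1 G_cover_2 in \<open>auto simp: eval_nat_numeral\<close>)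
    qed
  next
    fix j assume j: "2 \<le> j" and m: "m = j + 3"
    have IH: "G_cover (j+1) \<subseteq> set (rooted (j+1))" "G_cover j \<subseteq> set (rooted j)"
      using less.IH j m by auto
    show ?case
    proof
      fix v assume "v \<in> G_cover m"
      then show "v \<in> set (rooted m)"
        unfolding m rooted_Suc3[OF j]
        by (cases rule: G_cover_cases) (use IH in \<open>auto simp only: set_append set_map\<close>)
    qed
  qed
qed

lemma G_cover_count_le_1: "u \<in> G_cover m \<Longrightarrow> count u x \<le> 1"
  unfolding G_cover_def by (auto simp: count_mset_set')

lemma F_sq_set_mset: "U \<in> F_sq m \<Longrightarrow> set_mset U \<subseteq> {1..m}"
  unfolding F_sq_def G_cover_def
  using min_vertex_cover_path_subset min_vertex_cover_path_finite by fastforce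

lemma F_sq_shift:
  "U \<in> F_sq j \<longleftrightarrow> {#j+3, j+3, j+1, j+1#} + U \<in> F_sq (j+3)"
proof
  assume "U \<in> F_sq j"
  then obtain u v where "u \<in> G_cover j" "v \<in> G_cover j" "U = u + v"
    unfolding F_sq_def by blast
  moreover have "{#j+3, j+3, j+1, j+1#} + (u + v) = ({#j+3, j+1#} + u) + ({#j+3, j+1#} + v)"
    by (simp add: add_mset_commute)
  ultimately show "{#j+3, j+3, j+1, j+1#} + U \<in> F_sq (j+3)"
    unfolding F_sq_def using G_cover_insert_pair by blast
next
  assume "{#j+3, j+3, j+1, j+1#} + U \<in> F_sq (j+3)"
  then obtain v w where vw: "v \<in> G_cover (j+3)" "w \<in> G_cover (j+3)"
      and sum: "{#j+3, j+3, j+1, j+1#} + U = v + w"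
    unfolding F_sq_def by blast
  have shared: "x \<in># v" "x \<in># w" if "x = j+1 \<or> x = j+3" for x
  proof -
    have "2 \<le> count v x + count w x"
      using that unfolding count_union[symmetric] sum[symmetric] by auto
    then have "0 < count v x" "0 < count w x"
      using G_cover_count_le_1[OF vw(1), of x] G_cover_count_le_1[OF vw(2), of x] by linarith+
    then show "x \<in># v" "x \<in># w" by simp_all
  qed
  obtain v' where v': "v' \<in> G_cover j" "v = {#j+3, j+1#} + v'"
    using G_cover_remove_pair[OF vw(1)] shared by blast
  obtain w' where w': "w' \<in> G_cover j" "w = {#j+3, j+1#} + w'"
    using G_cover_remove_pair[OF vw(2)] shared by blast
  have "U = v' + w'" using sum unfolding v'(2) w'(2) by (simp add: add_mset_commute)
  then show "U \<in> F_sq j" unfolding F_sq_def using v'(1) w'(1) by blast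
qed

definition power_product :: "monomial list \<Rightarrow> nat list \<Rightarrow> monomial" where
  "power_product R a = (\<Sum>(c, u)\<leftarrow>zip a R. repeat_mset c u)"

lemma sum_repeat_mset_eq_power_product:
  "length a = length R \<Longrightarrow> (\<Sum>i<length R. repeat_mset (a ! i) (R ! i)) = power_product R a"
  unfolding power_product_def by (simp add: sum_list_sum_nth atLeast0LessThan)

lemma expressions_power_product:
  "expressions m M =
     {a. length a = length (rooted m) \<and> sum_list a = 2 \<and> power_product (rooted m) a = M}"
  unfolding expressions_def using sum_repeat_mset_eq_power_product by auto

lemma power_product_append:
  "length a = length R \<Longrightarrow> power_product (R @ R') (a @ a') = power_product R a + power_product R' a'"
  by (simp add: power_product_def)

lemma power_product_map_add:
  "length a = length R \<Longrightarrow>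
     power_product (map (\<lambda>u. C + u) R) a = repeat_mset (sum_list a) C + power_product R a"
  by (induction a R rule: list_induct2) (simp_all add: power_product_def repeat_mset_distrib)

lemma power_product_replicate_0: "power_product R (replicate r 0) = {#}"
  unfolding power_product_def
  by (induction r arbitrary: R) (auto simp: zip_Cons1 split: list.splits)

lemma power_product_pair:
  assumes "u \<in> set R" "v \<in> set R"
  obtains a where "length a = length R" "sum_list a = 2" "power_product R a = u + v"
proof -
  obtain i j where ij: "i < length R" "R ! i = u" "j < length R" "R ! j = v"
    using assms by (metis in_set_conv_nth)
  define a :: "nat list" where "a = map (\<lambda>k. of_bool (k = i) + of_bool (k = j)) [0..<length R]"
  have "sum_list a = (\<Sum>k<length R. of_bool (k = i) + of_bool (k = j))"
    unfolding a_def by (simp add: sum_list_sum_nth atLeast0LessThan)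
  also have "\<dots> = 2" using ij by (simp add: sum.distrib)
  finally have "sum_list a = 2" .
  moreover have "(\<Sum>k<length R. repeat_mset (a ! k) (R ! k)) =
        (\<Sum>k<length R. (if k = i then R ! k else {#}) + (if k = j then R ! k else {#}))"
    by (rule sum.cong) (auto simp: a_def repeat_mset_distrib)
  then have "power_product R a = u + v"
    using ij by (simp add: sum.distrib sum_repeat_mset_eq_power_product[symmetric] a_def)
  moreover have "length a = length R" unfolding a_def by simp
  ultimately show thesis using that by blast
qed

lemma expressions_finite: "finite (expressions m M)"
proof (rule finite_subset)
  show "expressions m M \<subseteq> {a. set a \<subseteq> {0..2} \<and> length a = length (rooted m)}"
    unfolding expressions_def using member_le_sum_list by fastforce
  show "finite {a. set a \<subseteq> {0..(2::nat)} \<and> length a = length (rooted m)}"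
    by (rule finite_lists_length_eq) auto
qed

lemma expressions_nonempty:
  assumes "U \<in> F_sq m" "2 \<le> m"
  shows "expressions m U \<noteq> {}"
proof -
  obtain u v where "u \<in> set (rooted m)" "v \<in> set (rooted m)" "U = u + v"
    using assms G_cover_subset_rooted unfolding F_sq_def by blast
  then show ?thesis
    unfolding expressions_power_product
    by (metis (mono_tags) empty_iff mem_Collect_eq power_product_pair)
qed

lemma lex_less_eq_less: "lex_less = (<)"
  by (simp add: fun_eq_iff lex_less_def list_less_def)

lemma max_expr_eq_Max:
  assumes "U \<in> F_sq m" "2 \<le> m"
  shows "max_expr m U = Max (expressions m U)"
  unfolding max_expr_def lex_less_eq_less
proof (rule the_equality)
  let ?E = "expressions m U"
  have E: "finite ?E" "?E \<noteq> {}" using expressions_finite expressions_nonempty[OF assms] .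
  show "Max ?E \<in> ?E \<and> (\<forall>b\<in>?E. b = Max ?E \<or> b < Max ?E)"
    using Max_in[OF E] Max_ge[OF E(1)] by (auto simp: order.order_iff_strict)
  show "a = Max ?E" if "a \<in> ?E \<and> (\<forall>b\<in>?E. b = a \<or> b < a)" for a
    using that E by (intro Max_eqI[symmetric]) auto
qed

lemma append_less_append_iff: "zs @ xs < zs @ ys \<longleftrightarrow> xs < (ys :: 'a :: order list)"
  by (induction zs) simp_all

lemma power_product_rooted_Suc3:
  assumes "2 \<le> j" "length a1 = length (rooted (j+1))" "length a2 = length (rooted j)"
  shows "power_product (rooted (j+3)) (a1 @ a2) =
           repeat_mset (sum_list a1) {#j+2#} + power_product (rooted (j+1)) a1 +
           (repeat_mset (sum_list a2) {#j+3, j+1#} + power_product (rooted j) a2)"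
  unfolding rooted_Suc3[OF assms(1)] using assms(2,3)
  by (simp add: power_product_append power_product_map_add)

lemma expressions_shift_decompose:
  assumes "2 \<le> j" "U \<in> F_sq j" and a: "a \<in> expressions (j+3) ({#j+3, j+3, j+1, j+1#} + U)"
  obtains b where "a = replicate (length (rooted (j+1))) 0 @ b" "b \<in> expressions j U"
proof -
  let ?R1 = "rooted (j+1)" and ?R2 = "rooted j" and ?X = "{#j+3, j+3, j+1, j+1#}"
  have len: "length a = length ?R1 + length ?R2" and "sum_list a = 2"
    and pp: "power_product (rooted (j+3)) a = ?X + U"
    using a unfolding expressions_power_product rooted_Suc3[OF assms(1)] by auto
  define a1 a2 where "a1 = take (length ?R1) a" and "a2 = drop (length ?R1) a"
  have a: "a = a1 @ a2" and len1: "length a1 = length ?R1" and len2: "length a2 = length ?R2"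
    using len unfolding a1_def a2_def by simp_all
  note split = power_product_rooted_Suc3[OF assms(1) len1 len2]
  \<comment> \<open>x_(j+2) divides every generator of the first block, but not ?X + U\<close>
  have "j+2 \<notin># U" using F_sq_set_mset[OF assms(2)] by auto
  then have "count (power_product (rooted (j+3)) a) (j+2) = 0"
    unfolding pp by (simp add: not_in_iff)
  then have "sum_list a1 = 0" unfolding a split by simp
  then have a1: "a1 = replicate (length ?R1) 0"
    using len1 replicate_length_same[of a1 0] by simp
  have "sum_list a2 = 2" using \<open>sum_list a = 2\<close> \<open>sum_list a1 = 0\<close> a by simp
  then have "?X + power_product ?R2 a2 = ?X + U"
    using pp unfolding a split unfolding a1
    by (simp add: power_product_replicate_0 sum_list_replicate numeral_2_eq_2 add_mset_commute)
  then have "a2 \<in> expressions j U"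
    unfolding expressions_power_product using len2 \<open>sum_list a2 = 2\<close> by simp
  then show thesis using that a a1 by blast
qed

lemma expressions_shift:
  assumes "2 \<le> j" "U \<in> F_sq j"
  shows "expressions (j+3) ({#j+3, j+3, j+1, j+1#} + U) =
         (\<lambda>b. replicate (length (rooted (j+1))) 0 @ b) ` expressions j U"
proof (intro equalityI subsetI)
  fix a assume "a \<in> expressions (j+3) ({#j+3, j+3, j+1, j+1#} + U)"
  then show "a \<in> (\<lambda>b. replicate (length (rooted (j+1))) 0 @ b) ` expressions j U"
    using expressions_shift_decompose[OF assms] by blast
next
  fix a assume "a \<in> (\<lambda>b. replicate (length (rooted (j+1))) 0 @ b) ` expressions j U"
  then obtain b where a: "a = replicate (length (rooted (j+1))) 0 @ b"
    and len: "length b = length (rooted j)" and "sum_list b = 2" and "power_product (rooted j) b = U"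
    unfolding expressions_power_product by blast
  then have "power_product (rooted (j+3)) a = {#j+3, j+3, j+1, j+1#} + U"
    using power_product_rooted_Suc3[OF assms(1), of "replicate (length (rooted (j+1))) 0" b]
    by (simp add: power_product_replicate_0 sum_list_replicate numeral_2_eq_2 add_mset_commute)
  then show "a \<in> expressions (j+3) ({#j+3, j+3, j+1, j+1#} + U)"
    unfolding expressions_power_product rooted_Suc3[OF assms(1)] using a len \<open>sum_list b = 2\<close>
    by simp
qed

lemma max_expr_shift:
  assumes "2 \<le> j" "U \<in> F_sq j"
  shows "max_expr (j+3) ({#j+3, j+3, j+1, j+1#} + U) =
         replicate (length (rooted (j+1))) 0 @ max_expr j U"
proof -
  let ?shift = "\<lambda>b. replicate (length (rooted (j+1))) 0 @ b"
  have "mono ?shift"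
    by (rule monoI) (auto simp: list_le_def append_less_append_iff)
  have "{#j+3, j+3, j+1, j+1#} + U \<in> F_sq (j+3)" using F_sq_shift assms(2) by blast
  then have "max_expr (j+3) ({#j+3, j+3, j+1, j+1#} + U) = Max (?shift ` expressions j U)"
    using max_expr_eq_Max expressions_shift[OF assms] by simp
  also have "\<dots> = ?shift (Max (expressions j U))"
    using mono_Max_commute[OF \<open>mono ?shift\<close> expressions_finite expressions_nonempty[OF assms(2,1)]]
    by simp
  finally show ?thesis using max_expr_eq_Max[OF assms(2,1)] by simp
qed

lemma rooted_gt_shift:
  assumes "2 \<le> j" "U \<in> F_sq j" "V \<in> F_sq j"
  shows "rooted_gt j U V \<longleftrightarrow>
           rooted_gt (j+3) ({#j+3, j+3, j+1, j+1#} + U) ({#j+3, j+3, j+1, j+1#} + V)"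
proof -
  have "{#j+3, j+3, j+1, j+1#} + U \<in> F_sq (j+3)" "{#j+3, j+3, j+1, j+1#} + V \<in> F_sq (j+3)"
    using assms(2,3) F_sq_shift by blast+
  then show ?thesis
    using assms(2,3)
    unfolding rooted_gt_def lex_less_eq_less
      max_expr_shift[OF assms(1,2)] max_expr_shift[OF assms(1,3)]
    by (simp add: append_less_append_iff)
qed

theorem lemma3p4:
  fixes n :: nat and U V :: monomial
  assumes "n \<ge> 5"
  shows "(U \<in> F_sq (n - 3) \<and> V \<in> F_sq (n - 3) \<longleftrightarrow>
            {#n, n, n - 2, n - 2#} + U \<in> F_sq n \<and> {#n, n, n - 2, n - 2#} + V \<in> F_sq n)
       \<and> (U \<in> F_sq (n - 3) \<and> V \<in> F_sq (n - 3) \<longrightarrow>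
            (rooted_gt (n - 3) U V \<longleftrightarrow>
             rooted_gt n ({#n, n, n - 2, n - 2#} + U) ({#n, n, n - 2, n - 2#} + V)))"
proof -
  define j where "j = n - 3"
  have j: "2 \<le> j" and n: "n - 3 = j" "n - 2 = j + 1" using assms unfolding j_def by auto
  then have "n = j + 3" by linarith
  show ?thesis
    unfolding n unfolding \<open>n = j + 3\<close> using F_sq_shift[of _ j] rooted_gt_shift[OF j] by blast
qed

end
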